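(* Let $\rho_0,\rho_1\in\mathcal{P}(\mathbb{R}^n)\cap L^\infty(\mathbb{R}^n)$ be radially symmetric about the origin, strictly radially decreasing and $C^2$ in the interior of their supports, with $\Delta\rho_0(0)<0$ and $\Delta\rho_1(0)<0$. Let $h_0,h_1$ be their height functions and $h_t=(1-t)h_0+th_1$. Then there exist $c,C\in(0,\infty)$ and $\bar s\in(0,1)$ depending only on $\rho_0,\rho_1$ such that $$c(1-s)^{-\frac{n}{n+2}}\le h_t'(s)\le C(1-s)^{-\frac{n}{n+2}}\quad\text{for all }t\in[0,1],\ s\in(\bar s,1).$$
   Context: Height function of a radially decreasing $\rho\in\mathcal{P}(\mathbb{R}^n)\cap L^\infty$: $h:(0,1)\to(0,\|\rho\|_\infty)$ defined by $\int_{\mathbb{R}^n}\min\{\rho(x),h(s)\}dx=s$. *)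

theory Defs
  imports "HOL-Analysis.Analysis"
begin

definition bounded_prob_density :: "('a::euclidean_space \<Rightarrow> real) \<Rightarrow> bool" where
  "bounded_prob_density \<rho> \<longleftrightarrow>
     \<rho> \<in> borel_measurable lborel \<and> (\<forall>x. 0 \<le> \<rho> x) \<and> integrable lborel \<rho> \<and>
     (\<integral>x. \<rho> x \<partial>lborel) = 1 \<and> (\<exists>M. AE x in lborel. \<bar>\<rho> x\<bar> \<le> M)"

definition radially_symmetric :: "('a::euclidean_space \<Rightarrow> real) \<Rightarrow> bool" where
  "radially_symmetric \<rho> \<longleftrightarrow> (\<forall>x y. norm x = norm y \<longrightarrow> \<rho> x = \<rho> y)"

definition strictly_radially_decreasing :: "('a::euclidean_space \<Rightarrow> real) \<Rightarrow> bool" where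
  "strictly_radially_decreasing \<rho> \<longleftrightarrow>
     (\<forall>x y. norm x < norm y \<longrightarrow> 0 < \<rho> y \<longrightarrow> \<rho> y < \<rho> x)"

definition supp :: "('a::euclidean_space \<Rightarrow> real) \<Rightarrow> 'a set" where
  "supp \<rho> = closure {x. \<rho> x \<noteq> 0}"

definition partial :: "'a::euclidean_space \<Rightarrow> ('a \<Rightarrow> real) \<Rightarrow> 'a \<Rightarrow> real" where
  "partial i f x = frechet_derivative f (at x) i"

definition C2_on :: "'a::euclidean_space set \<Rightarrow> ('a \<Rightarrow> real) \<Rightarrow> bool" where
  "C2_on U f \<longleftrightarrow>
     (\<forall>x\<in>U. f differentiable (at x)) \<and>
     (\<forall>i\<in>Basis. \<forall>x\<in>U. partial i f differentiable (at x)) \<and>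
     (\<forall>i\<in>Basis. \<forall>j\<in>Basis. continuous_on U (partial j (partial i f)))"

definition laplacian :: "('a::euclidean_space \<Rightarrow> real) \<Rightarrow> 'a \<Rightarrow> real" where
  "laplacian f x = (\<Sum>i\<in>Basis. partial i (partial i f) x)"

definition is_height_function :: "('a::euclidean_space \<Rightarrow> real) \<Rightarrow> (real \<Rightarrow> real) \<Rightarrow> bool" where
  "is_height_function \<rho> h \<longleftrightarrow>
     (\<forall>s\<in>{0<..<1}. (\<integral>x. min (\<rho> x) (h s) \<partial>lborel) = s)"

end

theory Submission
  imports Defs
begin

(* Write \<rho> x = f |x|.  Since f'(0) = 0 and f''(0) = \<Delta>\<rho>(0) / n < 0, the profile is quadratic
   at its peak M = f 0: M - A r^2 \<le> f r \<le> M - B r^2.  The height function inverts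
   H v = \<integral> min \<rho> v, whose derivative H' v = |{\<rho> > v}| is the volume of a ball of radius
   comparable to (M - v)^(1/2), hence comparable to (M - v)^(n/2).  Integrating from v to M,
   1 - H v is comparable to (M - v)^(n/2 + 1), so h' s = 1 / H' (h s) is comparable to
   (1 - s)^(-n/(n+2)).  Bounds of this form survive convex combinations. *)

section \<open>Calculus on the real line\<close>

lemma quadratic_bounds_near_critical_point:
  fixes f f' :: "real \<Rightarrow> real"
  assumes r1: "0 < r1"
    and f_deriv: "\<And>r. 0 \<le> r \<Longrightarrow> r < r1 \<Longrightarrow> (f has_real_derivative f' r) (at r)"
    and f'_0: "f' 0 = 0" and f''_0: "(f' has_real_derivative - L) (at 0)" and L: "0 < L"
  shows "\<exists>\<delta>>0. \<forall>r\<in>{0..\<delta>}. f 0 - 3*L/4 * r\<^sup>2 \<le> f r \<and> f r \<le> f 0 - L/4 * r\<^sup>2"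
proof -
  have "((\<lambda>y. f' y / y) \<longlongrightarrow> - L) (at_right 0)"
    using f''_0 f'_0 by (simp add: has_field_derivative_iff filterlim_at_split)
  then have "eventually (\<lambda>y. - 3*L/2 < f' y / y \<and> f' y / y < - L/2) (at_right 0)"
    using L by (intro eventually_conj order_tendstoD) auto
  then obtain b where b: "0 < b" "\<And>y. 0 < y \<Longrightarrow> y < b \<Longrightarrow> - 3*L/2 * y < f' y \<and> f' y < - L/2 * y"
    by (auto simp: eventually_at_right_field field_simps)
  define \<delta> where "\<delta> = min b r1 / 2"
  have \<delta>: "0 < \<delta>" "\<delta> < b" "\<delta> < r1"
    using b r1 by (auto simp: \<delta>_def)
  have f_cont: "continuous_on {0..r} f" if "r \<le> \<delta>" for r
  proof (intro continuous_at_imp_continuous_on ballI)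
    fix x assume "x \<in> {0..r}"
    with that \<delta> show "isCont f x" by (intro DERIV_isCont[OF f_deriv]) auto
  qed
  have "f 0 - 3*L/4 * r\<^sup>2 \<le> f r \<and> f r \<le> f 0 - L/4 * r\<^sup>2" if r: "0 \<le> r" "r \<le> \<delta>" for r
  proof
    have "f 0 + 3*L/4 * 0\<^sup>2 \<le> f r + 3*L/4 * r\<^sup>2"
    proof (rule DERIV_nonneg_imp_increasing_open[OF r(1)])
      fix x assume "0 < x" "x < r"
      with b(2)[of x] f_deriv[of x] \<delta> r
      show "\<exists>y. ((\<lambda>x. f x + 3*L/4 * x\<^sup>2) has_real_derivative y) (at x) \<and> 0 \<le> y"
        by (intro exI[of _ "f' x + 3*L/4 * (2 * x)"]) (auto intro!: derivative_eq_intros)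
    qed (use f_cont[OF r(2)] in \<open>auto intro!: continuous_intros\<close>)
    then show "f 0 - 3*L/4 * r\<^sup>2 \<le> f r" by simp
    have "f r + L/4 * r\<^sup>2 \<le> f 0 + L/4 * 0\<^sup>2"
    proof (rule DERIV_nonpos_imp_decreasing_open[OF r(1)])
      fix x assume "0 < x" "x < r"
      with b(2)[of x] f_deriv[of x] \<delta> r
      show "\<exists>y. ((\<lambda>x. f x + L/4 * x\<^sup>2) has_real_derivative y) (at x) \<and> y \<le> 0"
        by (intro exI[of _ "f' x + L/4 * (2 * x)"]) (auto intro!: derivative_eq_intros)
    qed (use f_cont[OF r(2)] in \<open>auto intro!: continuous_intros\<close>)
    then show "f r \<le> f 0 - L/4 * r\<^sup>2" by simp
  qed
  with \<delta> show ?thesis by auto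
qed

lemma has_real_derivative_squeeze:
  fixes H \<Phi> :: "real \<Rightarrow> real"
  assumes v: "a < v" "v < b" and \<Phi>_cont: "isCont \<Phi> v"
    and increments: "\<And>x y. a < x \<Longrightarrow> x < y \<Longrightarrow> y < b \<Longrightarrow>
                       (y - x) * \<Phi> y \<le> H y - H x \<and> H y - H x \<le> (y - x) * \<Phi> x"
  shows "(H has_real_derivative \<Phi> v) (at v)"
  unfolding has_field_derivative_iff
proof (rule tendsto_sandwich)
  have quotient_between: "min (\<Phi> y) (\<Phi> v) \<le> (H y - H v) / (y - v) \<and>
      (H y - H v) / (y - v) \<le> max (\<Phi> y) (\<Phi> v)"
    if "y \<noteq> v" "a < y" "y < b" for y
  proof -
    have "\<Phi> y \<le> (H y - H v) / (y - v) \<and> (H y - H v) / (y - v) \<le> \<Phi> v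
        \<or> \<Phi> v \<le> (H y - H v) / (y - v) \<and> (H y - H v) / (y - v) \<le> \<Phi> y"
    proof (cases "v < y")
      case True
      with increments[of v y] v that show ?thesis
        by (intro disjI1) (simp add: pos_le_divide_eq pos_divide_le_eq mult.commute)
    next
      case False
      with that have "y < v" by simp
      moreover have "(H y - H v) / (y - v) = (H v - H y) / (v - y)"
        by (metis minus_diff_eq minus_divide_divide)
      ultimately show ?thesis
        using increments[of y v] v that
        by (intro disjI2) (simp add: pos_le_divide_eq pos_divide_le_eq mult.commute)
    qed
    then show ?thesis by (auto simp: min_le_iff_disj le_max_iff_disj)
  qed
  have "eventually (\<lambda>y. y \<in> {a<..<b}) (at v)"
    using v by (intro eventually_at_in_open') auto
  then have near: "eventually (\<lambda>y. y \<noteq> v \<and> a < y \<and> y < b) (at v)"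
    using eventually_neq_at_within[of v v UNIV] by eventually_elim auto
  show "eventually (\<lambda>y. min (\<Phi> y) (\<Phi> v) \<le> (H y - H v) / (y - v)) (at v)"
       "eventually (\<lambda>y. (H y - H v) / (y - v) \<le> max (\<Phi> y) (\<Phi> v)) (at v)"
    using near by (eventually_elim, use quotient_between in blast)+
  have \<Phi>_lim: "(\<Phi> \<longlongrightarrow> \<Phi> v) (at v)"
    using \<Phi>_cont by (simp add: isCont_def)
  show "((\<lambda>y. min (\<Phi> y) (\<Phi> v)) \<longlongrightarrow> \<Phi> v) (at v)"
    using tendsto_min[OF \<Phi>_lim tendsto_const[of "\<Phi> v"]] by simp
  show "((\<lambda>y. max (\<Phi> y) (\<Phi> v)) \<longlongrightarrow> \<Phi> v) (at v)"
    using tendsto_max[OF \<Phi>_lim tendsto_const[of "\<Phi> v"]] by simp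
qed

lemma increment_bounds_of_power_bounded_derivative:
  fixes H \<Phi> :: "real \<Rightarrow> real"
  assumes "u \<le> M" and H_cont: "continuous_on {u..M} H" and k: "0 < k"
    and H_deriv: "\<And>v. u < v \<Longrightarrow> v < M \<Longrightarrow> (H has_real_derivative \<Phi> v) (at v)"
    and lower: "\<And>v. u < v \<Longrightarrow> v < M \<Longrightarrow> c1 * (M - v) powr k \<le> \<Phi> v"
    and upper: "\<And>v. u < v \<Longrightarrow> v < M \<Longrightarrow> \<Phi> v \<le> c2 * (M - v) powr k"
  shows "c1 / (k + 1) * (M - u) powr (k + 1) \<le> H M - H u"
    and "H M - H u \<le> c2 / (k + 1) * (M - u) powr (k + 1)"
proof -
  define G where "G c v = H v + c / (k + 1) * (M - v) powr (k + 1)" for c v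
  have G_cont: "continuous_on {u..M} (G c)" for c
    unfolding G_def using k by (intro continuous_intros continuous_on_powr' H_cont) auto
  have G_deriv: "(G c has_real_derivative \<Phi> v - c * (M - v) powr k) (at v)"
    if "u < v" "v < M" for c v
  proof -
    have "\<Phi> v - c * (M - v) powr k = \<Phi> v + c / (k + 1) * - ((k + 1) * (M - v) powr k)"
      using k by (simp add: field_simps)
    also have "(G c has_real_derivative \<dots>) (at v)"
      unfolding G_def using that k by (auto intro!: derivative_eq_intros H_deriv)
    finally show ?thesis .
  qed
  have "G c1 u \<le> G c1 M"
  proof (rule DERIV_nonneg_imp_increasing_open[OF \<open>u \<le> M\<close> _ G_cont])
    fix v assume "u < v" "v < M"
    with G_deriv[OF this, of c1] lower[OF this]
    show "\<exists>y. (G c1 has_real_derivative y) (at v) \<and> 0 \<le> y" by auto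
  qed
  then show "c1 / (k + 1) * (M - u) powr (k + 1) \<le> H M - H u"
    using k by (simp add: G_def)
  have "G c2 M \<le> G c2 u"
  proof (rule DERIV_nonpos_imp_decreasing_open[OF \<open>u \<le> M\<close> _ G_cont])
    fix v assume "u < v" "v < M"
    with G_deriv[OF this, of c2] upper[OF this]
    show "\<exists>y. (G c2 has_real_derivative y) (at v) \<and> y \<le> 0" by auto
  qed
  then show "H M - H u \<le> c2 / (k + 1) * (M - u) powr (k + 1)"
    using k by (simp add: G_def)
qed

lemma has_real_derivative_inverse_on_interval:
  fixes H h :: "real \<Rightarrow> real"
  assumes H_cont: "continuous_on {a..b} H" and H_inj: "inj_on H {a..b}"
    and h: "\<And>y. p < y \<Longrightarrow> y < q \<Longrightarrow> h y \<in> {a..b} \<and> H (h y) = y"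
    and s: "p < s" "s < q"
    and H_deriv: "(H has_real_derivative D) (at (h s))" and "D \<noteq> 0"
  shows "(h has_real_derivative inverse D) (at s)"
proof (rule DERIV_inverse_function[where f = H and g = h, OF H_deriv \<open>D \<noteq> 0\<close> s])
  define g where "g = the_inv_into {a..b} H"
  have "continuous_on (H ` {a..b}) g"
    using H_cont H_inj by (intro continuous_on_inv) (auto simp: g_def the_inv_into_f_f)
  moreover have "{p<..<q} \<subseteq> H ` {a..b}"
    using h by (force intro: rev_image_eqI)
  ultimately have "continuous_on {p<..<q} g"
    by (rule continuous_on_subset)
  moreover have "h y = g y" if "y \<in> {p<..<q}" for y
  proof -
    from that h have "h y \<in> {a..b}" "H (h y) = y" by auto
    then show ?thesis
      unfolding g_def using the_inv_into_f_f[OF H_inj] by metis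
  qed
  ultimately have "continuous_on {p<..<q} h"
    using continuous_on_cong by blast
  then show "isCont h s"
    using s continuous_on_eq_continuous_at[of "{p<..<q}" h] by auto
qed (use h in auto)

lemma reciprocal_bounds_by_powr:
  fixes X c1 c2 k S P :: real
  assumes X: "0 < X" and c: "0 < c1" "0 < c2" and k: "0 < k"
    and S: "c1 / (k + 1) * X powr (k + 1) \<le> S" "S \<le> c2 / (k + 1) * X powr (k + 1)"
    and P: "c1 * X powr k \<le> P" "P \<le> c2 * X powr k"
  shows "(c1 / (k + 1)) powr (k / (k + 1)) / c2 * S powr (- (k / (k + 1))) \<le> inverse P"
    and "inverse P \<le> (c2 / (k + 1)) powr (k / (k + 1)) / c1 * S powr (- (k / (k + 1)))"
proof -
  define q where "q = k / (k + 1)"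
  have "0 < c1 / (k + 1) * X powr (k + 1)" "0 < c1 * X powr k"
    using X c k by simp_all
  with S(1) P(1) have S_pos: "0 < S" and P_pos: "0 < P"
    by linarith+
  have powr_q: "(a * X powr (k + 1)) powr q = a powr q * X powr k" if "0 \<le> a" for a
    using that X k by (simp add: powr_mult powr_powr q_def)
  have "(c1 / (k + 1)) powr q * X powr k \<le> S powr q"
    using powr_mono2[of q, OF _ _ S(1)] powr_q[of "c1 / (k + 1)"] c X k by (simp add: q_def)
  then have "(c1 / (k + 1)) powr q / c2 * inverse (S powr q) \<le> inverse (c2 * X powr k)"
    using c X k S_pos by (simp add: field_simps)
  also have "\<dots> \<le> inverse P"
    using P P_pos by (intro le_imp_inverse_le) auto
  finally show "(c1 / (k + 1)) powr (k / (k + 1)) / c2 * S powr (- (k / (k + 1))) \<le> inverse P"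
    using S_pos by (simp add: powr_minus q_def)
  have "S powr q \<le> (c2 / (k + 1)) powr q * X powr k"
    using powr_mono2[of q, OF _ _ S(2)] powr_q[of "c2 / (k + 1)"] c X k S_pos by (simp add: q_def)
  have "inverse P \<le> inverse (c1 * X powr k)"
    using P c X by (intro le_imp_inverse_le) auto
  also have "\<dots> \<le> (c2 / (k + 1)) powr q / c1 * inverse (S powr q)"
    using \<open>S powr q \<le> _\<close> c X k S_pos by (simp add: field_simps)
  finally show "inverse P \<le> (c2 / (k + 1)) powr (k / (k + 1)) / c1 * S powr (- (k / (k + 1)))"
    using S_pos by (simp add: powr_minus q_def)
qed

definition derivative_bounds_on ::
    "(real \<Rightarrow> real) \<Rightarrow> (real \<Rightarrow> real) \<Rightarrow> real \<Rightarrow> real \<Rightarrow> real set \<Rightarrow> bool"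
  where "derivative_bounds_on h w c C S \<longleftrightarrow>
    (\<forall>s\<in>S. \<exists>D. (h has_real_derivative D) (at s) \<and> c * w s \<le> D \<and> D \<le> C * w s)"

lemma derivative_bounds_on_subset:
  "derivative_bounds_on h w c C S \<Longrightarrow> T \<subseteq> S \<Longrightarrow> derivative_bounds_on h w c C T"
  unfolding derivative_bounds_on_def by blast

lemma derivative_bounds_on_convex_combination:
  assumes h0: "derivative_bounds_on h0 w c0 C0 S" and h1: "derivative_bounds_on h1 w c1 C1 S"
    and w: "\<And>s. s \<in> S \<Longrightarrow> 0 \<le> w s" and t: "t \<in> {0..1}"
  shows "derivative_bounds_on (\<lambda>r. (1 - t) * h0 r + t * h1 r) w (min c0 c1) (max C0 C1) S"
  unfolding derivative_bounds_on_def
proof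
  fix s assume s: "s \<in> S"
  obtain D0 where D0: "(h0 has_real_derivative D0) (at s)" "c0 * w s \<le> D0" "D0 \<le> C0 * w s"
    using h0 s by (auto simp: derivative_bounds_on_def)
  obtain D1 where D1: "(h1 has_real_derivative D1) (at s)" "c1 * w s \<le> D1" "D1 \<le> C1 * w s"
    using h1 s by (auto simp: derivative_bounds_on_def)
  have "min c0 c1 * w s \<le> c0 * w s" "min c0 c1 * w s \<le> c1 * w s"
    "C0 * w s \<le> max C0 C1 * w s" "C1 * w s \<le> max C0 C1 * w s"
    using w[OF s] by (simp_all add: mult_right_mono)
  with D0 D1 have "min c0 c1 * w s \<le> D0" "min c0 c1 * w s \<le> D1"
    "D0 \<le> max C0 C1 * w s" "D1 \<le> max C0 C1 * w s"
    by linarith+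
  then have "(1 - t) * (min c0 c1 * w s) + t * (min c0 c1 * w s) \<le> (1 - t) * D0 + t * D1"
    "(1 - t) * D0 + t * D1 \<le> (1 - t) * (max C0 C1 * w s) + t * (max C0 C1 * w s)"
    using t by (intro add_mono mult_left_mono; simp)+
  then have "min c0 c1 * w s \<le> (1 - t) * D0 + t * D1" "(1 - t) * D0 + t * D1 \<le> max C0 C1 * w s"
    by (simp_all add: algebra_simps)
  moreover have "((\<lambda>r. (1 - t) * h0 r + t * h1 r) has_real_derivative (1 - t) * D0 + t * D1) (at s)"
    by (intro DERIV_add DERIV_cmult D0(1) D1(1))
  ultimately show "\<exists>D. ((\<lambda>r. (1 - t) * h0 r + t * h1 r) has_real_derivative D) (at s) \<and>
      min c0 c1 * w s \<le> D \<and> D \<le> max C0 C1 * w s"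
    by blast
qed

section \<open>Integrals of truncated functions\<close>

lemma integrable_min_const:
  fixes \<rho> :: "'a \<Rightarrow> real"
  assumes "integrable M \<rho>" "\<And>x. 0 \<le> \<rho> x" "0 \<le> v"
  shows "integrable M (\<lambda>x. min (\<rho> x) v)"
  using assms borel_measurable_integrable[OF assms(1)]
  by (intro Bochner_Integration.integrable_bound[OF assms(1)]) auto

lemma integral_min_increment_bounds:
  fixes \<rho> :: "'a \<Rightarrow> real"
  assumes \<rho>: "integrable M \<rho>" "\<And>x. 0 \<le> \<rho> x"
    and vw: "0 \<le> v" "v < w"
    and finite: "emeasure M {x\<in>space M. v < \<rho> x} < \<infinity>"
  shows "(w - v) * measure M {x\<in>space M. w \<le> \<rho> x}
           \<le> (\<integral>x. min (\<rho> x) w \<partial>M) - (\<integral>x. min (\<rho> x) v \<partial>M)"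
    and "(\<integral>x. min (\<rho> x) w \<partial>M) - (\<integral>x. min (\<rho> x) v \<partial>M)
           \<le> (w - v) * measure M {x\<in>space M. v < \<rho> x}"
proof -
  let ?upper = "{x\<in>space M. v < \<rho> x}" and ?lower = "{x\<in>space M. w \<le> \<rho> x}"
  have \<rho>_meas: "\<rho> \<in> borel_measurable M"
    using \<rho>(1) by (rule borel_measurable_integrable)
  have sets: "?upper \<in> sets M" "?lower \<in> sets M"
    using \<rho>_meas by measurable
  have "emeasure M ?lower \<le> emeasure M ?upper"
    using sets vw by (intro emeasure_mono) auto
  with finite have finite': "emeasure M ?lower < \<infinity>"
    by order
  note min_integrable = integrable_min_const[OF \<rho>]
  have diff: "(\<integral>x. min (\<rho> x) w \<partial>M) - (\<integral>x. min (\<rho> x) v \<partial>M) =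
      (\<integral>x. min (\<rho> x) w - min (\<rho> x) v \<partial>M)"
    using vw by (intro Bochner_Integration.integral_diff[symmetric] min_integrable) auto
  have "(\<integral>x. (w - v) * indicator ?lower x \<partial>M) \<le> (\<integral>x. min (\<rho> x) w - min (\<rho> x) v \<partial>M)"
    using sets finite' vw min_integrable
    by (intro Bochner_Integration.integral_mono integrable_mult_right integrable_real_indicator)
       (auto simp: indicator_def)
  then show "(w - v) * measure M ?lower \<le> (\<integral>x. min (\<rho> x) w \<partial>M) - (\<integral>x. min (\<rho> x) v \<partial>M)"
    using sets by (simp add: diff Int_absorb2)
  have "(\<integral>x. min (\<rho> x) w - min (\<rho> x) v \<partial>M) \<le> (\<integral>x. (w - v) * indicator ?upper x \<partial>M)"
    using sets finite vw min_integrable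
    by (intro Bochner_Integration.integral_mono integrable_mult_right integrable_real_indicator)
       (auto simp: indicator_def)
  then show "(\<integral>x. min (\<rho> x) w \<partial>M) - (\<integral>x. min (\<rho> x) v \<partial>M) \<le> (w - v) * measure M ?upper"
    using sets by (simp add: diff Int_absorb2)
qed

section \<open>Radially symmetric densities\<close>

lemma has_real_derivative_partial_along_ray:
  fixes g :: "'a::euclidean_space \<Rightarrow> real"
  assumes "g differentiable (at (r *\<^sub>R i))"
  shows "((\<lambda>r. g (r *\<^sub>R i)) has_real_derivative partial i g (r *\<^sub>R i)) (at r)"
proof -
  let ?D = "frechet_derivative g (at (r *\<^sub>R i))"
  have D: "(g has_derivative ?D) (at (r *\<^sub>R i))"
    using assms frechet_derivative_works by blast
  have ray: "((\<lambda>r. r *\<^sub>R i) has_derivative (\<lambda>t. t *\<^sub>R i)) (at r)"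
    by (auto intro!: derivative_eq_intros)
  have "((\<lambda>r. g (r *\<^sub>R i)) has_derivative (\<lambda>t. ?D (t *\<^sub>R i))) (at r)"
    using has_derivative_compose[OF ray D] by simp
  moreover have "(\<lambda>t. ?D (t *\<^sub>R i)) = (*) (?D i)"
    using real_vector.linear_scale[OF has_derivative_linear[OF D]] by auto
  ultimately show ?thesis
    by (simp add: has_field_derivative_def partial_def)
qed

lemma radially_symmetric_along_axis:
  assumes "radially_symmetric \<rho>" "i \<in> Basis"
  shows "\<rho> x = \<rho> (norm x *\<^sub>R i)"
proof -
  have "norm x = norm (norm x *\<^sub>R i)"
    using assms(2) by simp
  with assms(1) show ?thesis
    unfolding radially_symmetric_def by blast
qed

lemma strictly_radially_decreasing_max_at_origin:
  assumes "strictly_radially_decreasing \<rho>" "\<And>y. 0 \<le> \<rho> y"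
  shows "\<rho> x \<le> \<rho> 0"
proof (cases "x = 0 \<or> \<rho> x = 0")
  case False
  then have "norm 0 < norm x" "0 < \<rho> x"
    using assms(2)[of x] by auto
  with assms(1) show ?thesis
    unfolding strictly_radially_decreasing_def by (meson less_imp_le)
qed (use assms(2) in auto)

lemma bounded_prob_density_positive_near_origin:
  fixes \<rho> :: "'a::euclidean_space \<Rightarrow> real"
  assumes bp: "bounded_prob_density \<rho>" and sd: "strictly_radially_decreasing \<rho>"
  obtains r1 where "0 < r1" "\<And>x :: 'a. norm x < r1 \<Longrightarrow> 0 < \<rho> x"
proof -
  have "\<exists>y. y \<noteq> 0 \<and> 0 < \<rho> y"
  proof (rule ccontr)
    assume "\<not> ?thesis"
    moreover have "0 \<le> \<rho> y" for y
      using bp by (simp add: bounded_prob_density_def)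
    ultimately have "\<rho> y = 0" if "y \<noteq> 0" for y
      using that by (metis le_less)
    then have "AE x in lborel. \<rho> x = 0"
      using AE_lborel_singleton[of 0] by (auto elim!: AE_mp)
    then have "(\<integral>x. \<rho> x \<partial>lborel) = 0"
      by (rule integral_eq_zero_AE)
    with bp show False
      by (simp add: bounded_prob_density_def)
  qed
  then obtain y where y: "y \<noteq> 0" "0 < \<rho> y"
    by blast
  show ?thesis
  proof (rule that)
    show "0 < norm y"
      using y by simp
    fix x :: 'a assume "norm x < norm y"
    with sd y have "\<rho> y < \<rho> x"
      unfolding strictly_radially_decreasing_def by blast
    with y show "0 < \<rho> x"
      by simp
  qed
qed

lemma laplacian_at_origin_of_radial:
  fixes \<rho> :: "'a::euclidean_space \<Rightarrow> real"
  assumes rs: "radially_symmetric \<rho>" and r1: "0 < r1"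
    and diff: "\<And>x. norm x < r1 \<Longrightarrow> \<rho> differentiable (at x)"
    and diff_partial: "\<And>i. i \<in> Basis \<Longrightarrow> partial i \<rho> differentiable (at 0)"
    and e: "e \<in> Basis"
  shows "laplacian \<rho> 0 = real DIM('a) * partial e (partial e \<rho>) 0"
proof -
  have axis: "(\<lambda>r. \<rho> (r *\<^sub>R i)) = (\<lambda>r. \<rho> (r *\<^sub>R e))" if "i \<in> Basis" for i
  proof
    fix r :: real
    have "norm (r *\<^sub>R i) = norm (r *\<^sub>R e)"
      using that e by simp
    with rs show "\<rho> (r *\<^sub>R i) = \<rho> (r *\<^sub>R e)"
      unfolding radially_symmetric_def by blast
  qed
  have partial_axis: "partial i \<rho> (r *\<^sub>R i) = partial e \<rho> (r *\<^sub>R e)"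
    if r: "\<bar>r\<bar> < r1" and i: "i \<in> Basis" for r i
  proof -
    have "((\<lambda>r. \<rho> (r *\<^sub>R e)) has_real_derivative partial i \<rho> (r *\<^sub>R i)) (at r)"
      using has_real_derivative_partial_along_ray[of \<rho> r i] diff[of "r *\<^sub>R i"] r i
      by (simp add: axis[OF i])
    moreover have "((\<lambda>r. \<rho> (r *\<^sub>R e)) has_real_derivative partial e \<rho> (r *\<^sub>R e)) (at r)"
      using has_real_derivative_partial_along_ray[of \<rho> r e] diff[of "r *\<^sub>R e"] r e by simp
    ultimately show ?thesis
      by (rule DERIV_unique)
  qed
  have "partial i (partial i \<rho>) 0 = partial e (partial e \<rho>) 0" if i: "i \<in> Basis" for i
  proof -
    have "((\<lambda>r. partial i \<rho> (r *\<^sub>R i)) has_real_derivative partial i (partial i \<rho>) 0) (at 0)"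
      using has_real_derivative_partial_along_ray[of "partial i \<rho>" 0 i] diff_partial[OF i] by simp
    then have "((\<lambda>r. partial e \<rho> (r *\<^sub>R e)) has_real_derivative partial i (partial i \<rho>) 0) (at 0)"
    proof (rule has_field_derivative_transform_within_open[where S = "ball 0 r1"])
      fix r :: real assume "r \<in> ball 0 r1"
      then show "partial i \<rho> (r *\<^sub>R i) = partial e \<rho> (r *\<^sub>R e)"
        using partial_axis[OF _ i, of r] by simp
    qed (use r1 in auto)
    moreover have "((\<lambda>r. partial e \<rho> (r *\<^sub>R e)) has_real_derivative partial e (partial e \<rho>) 0) (at 0)"
      using has_real_derivative_partial_along_ray[of "partial e \<rho>" 0 e] diff_partial[OF e] by simp
    ultimately show ?thesis
      by (rule DERIV_unique)
  qed
  then show ?thesis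
    by (simp add: laplacian_def)
qed

section \<open>The mass below a level of a radial profile\<close>

locale radial_profile_density =
  fixes \<rho> :: "'a::euclidean_space \<Rightarrow> real" and f :: "real \<Rightarrow> real" and r0 A B :: real
  assumes density_eq_profile: "\<And>x. \<rho> x = f (norm x)"
    and integrable_density: "integrable lborel \<rho>"
    and integral_density: "(\<integral>x. \<rho> x \<partial>lborel) = 1"
    and profile_nonneg: "\<And>r. 0 \<le> f r"
    and profile_strict_decreasing: "\<And>a b. 0 \<le> a \<Longrightarrow> a < b \<Longrightarrow> 0 < f b \<Longrightarrow> f b < f a"
    and r0_pos: "0 < r0" and profile_r0_pos: "0 < f r0"
    and profile_continuous: "continuous_on {0..r0} f"
    and B_pos: "0 < B" and B_le_A: "B \<le> A"
    and profile_quadratic_bounds: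
      "\<And>r. r \<in> {0..r0} \<Longrightarrow> f 0 - A * r\<^sup>2 \<le> f r \<and> f r \<le> f 0 - B * r\<^sup>2"
begin

lemma density_nonneg: "0 \<le> \<rho> x"
  by (simp add: density_eq_profile profile_nonneg)

lemma profile_le_peak: "0 \<le> r \<Longrightarrow> f r \<le> f 0"
  using profile_strict_decreasing[of 0 r] profile_nonneg[of r] profile_nonneg[of 0]
  by (cases "r = 0") (auto simp: le_less)

lemma density_le_peak: "\<rho> x \<le> f 0"
  by (simp add: density_eq_profile profile_le_peak)

lemma profile_r0_less_peak: "f r0 < f 0"
  using profile_strict_decreasing[of 0 r0] r0_pos profile_r0_pos by simp

lemma profile_r0_le: "r \<in> {0..r0} \<Longrightarrow> f r0 \<le> f r"
  using profile_strict_decreasing[of r r0] profile_r0_pos by (cases "r = r0") auto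

lemma bij_betw_profile: "bij_betw f {0..r0} {f r0..f 0}"
proof (rule bij_betw_imageI)
  show "inj_on f {0..r0}"
  proof (rule linorder_inj_onI)
    fix a b assume "a < b" "a \<in> {0..r0}" "b \<in> {0..r0}"
    then show "f a \<noteq> f b"
      using profile_strict_decreasing[of a b] profile_r0_le[of b] profile_r0_pos by auto
  qed auto
  show "f ` {0..r0} = {f r0..f 0}"
  proof
    show "f ` {0..r0} \<subseteq> {f r0..f 0}"
      using profile_r0_le profile_le_peak by auto
    show "{f r0..f 0} \<subseteq> f ` {0..r0}"
    proof
      fix v assume "v \<in> {f r0..f 0}"
      then obtain r where "r \<in> {0..r0}" "f r = v"
        using IVT2'[of f r0 v 0] profile_continuous r0_pos by auto
      then show "v \<in> f ` {0..r0}" by blast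
    qed
  qed
qed

definition level_radius :: "real \<Rightarrow> real"
  where "level_radius = the_inv_into {0..r0} f"

lemma level_radius_in: "v \<in> {f r0..f 0} \<Longrightarrow> level_radius v \<in> {0..r0}"
  unfolding level_radius_def
  using bij_betw_apply[OF bij_betw_the_inv_into[OF bij_betw_profile]] by blast

lemma profile_level_radius: "v \<in> {f r0..f 0} \<Longrightarrow> f (level_radius v) = v"
  unfolding level_radius_def by (rule f_the_inv_into_f_bij_betw[OF bij_betw_profile])

lemma level_radius_continuous: "continuous_on {f r0..f 0} level_radius"
proof -
  have "continuous_on (f ` {0..r0}) level_radius"
  proof (rule continuous_on_inv[OF profile_continuous compact_Icc])
    show "\<forall>r\<in>{0..r0}. level_radius (f r) = r"
      using the_inv_into_f_f[OF bij_betw_imp_inj_on[OF bij_betw_profile]]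
      by (simp add: level_radius_def)
  qed
  then show ?thesis
    using bij_betw_profile by (simp add: bij_betw_def)
qed

lemma level_radius_pos:
  assumes "v \<in> {f r0..<f 0}"
  shows "0 < level_radius v"
proof -
  have v: "v \<in> {f r0..f 0}"
    using assms by simp
  have "level_radius v \<noteq> 0"
    using profile_level_radius[OF v] assms by auto
  with level_radius_in[OF v] show ?thesis
    by simp
qed

lemma level_less_profile_iff:
  assumes "v \<in> {f r0..f 0}" "0 \<le> r"
  shows "v < f r \<longleftrightarrow> r < level_radius v" and "v \<le> f r \<longleftrightarrow> r \<le> level_radius v"
proof -
  let ?R = "level_radius v"
  have fR: "f ?R = v" and R: "0 \<le> ?R" and v: "0 < v"
    using assms level_radius_in[of v] profile_level_radius[of v] profile_r0_pos by auto
  have below: "f r < v" if "?R < r"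
  proof (cases "f r = 0")
    case False
    with profile_nonneg[of r] have "0 < f r" by simp
    with profile_strict_decreasing[OF R that] fR show ?thesis by simp
  qed (use v in simp)
  have above: "v < f r" if "r < ?R"
    using profile_strict_decreasing[OF assms(2) that] fR v by simp
  consider "r < ?R" | "r = ?R" | "?R < r" by linarith
  then show "v < f r \<longleftrightarrow> r < ?R" "v \<le> f r \<longleftrightarrow> r \<le> ?R"
    by cases (use below above fR in fastforce)+
qed

lemma superlevel_set_eq_ball:
  assumes "v \<in> {f r0..f 0}"
  shows "{x. v < \<rho> x} = ball 0 (level_radius v)"
proof -
  have "v < \<rho> x \<longleftrightarrow> x \<in> ball 0 (level_radius v)" for x
    using level_less_profile_iff(1)[OF assms, of "norm x"] by (simp add: density_eq_profile)
  then show ?thesis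
    by blast
qed

lemma superlevel_set_eq_cball:
  assumes "v \<in> {f r0..f 0}"
  shows "{x. v \<le> \<rho> x} = cball 0 (level_radius v)"
proof -
  have "v \<le> \<rho> x \<longleftrightarrow> x \<in> cball 0 (level_radius v)" for x
    using level_less_profile_iff(2)[OF assms, of "norm x"] by (simp add: density_eq_profile)
  then show ?thesis
    by blast
qed

definition truncated_mass :: "real \<Rightarrow> real"
  where "truncated_mass v = (\<integral>x. min (\<rho> x) v \<partial>lborel)"

definition level_volume :: "real \<Rightarrow> real"
  where "level_volume v = unit_ball_vol (real DIM('a)) * level_radius v ^ DIM('a)"

lemma measure_superlevel_sets:
  assumes "v \<in> {f r0..f 0}"
  shows "emeasure lborel {x. v < \<rho> x} < \<infinity>"
    and "measure lborel {x. v < \<rho> x} = level_volume v"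
    and "measure lborel {x. v \<le> \<rho> x} = level_volume v"
proof -
  have R: "0 \<le> level_radius v"
    using level_radius_in[OF assms] by simp
  show "emeasure lborel {x. v < \<rho> x} < \<infinity>"
    using emeasure_ball[OF R, where c = "0 :: 'a"] by (simp add: superlevel_set_eq_ball[OF assms])
  show "measure lborel {x. v < \<rho> x} = level_volume v"
    using content_ball[OF R, where c = "0 :: 'a"]
    by (simp add: superlevel_set_eq_ball[OF assms] level_volume_def)
  show "measure lborel {x. v \<le> \<rho> x} = level_volume v"
    using content_cball[OF R, where c = "0 :: 'a"]
    by (simp add: superlevel_set_eq_cball[OF assms] level_volume_def)
qed

lemma truncated_mass_increment_bounds:
  assumes "v \<in> {f r0..f 0}" "w \<in> {f r0..f 0}" "v < w"
  shows "(w - v) * level_volume w \<le> truncated_mass w - truncated_mass v"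
    and "truncated_mass w - truncated_mass v \<le> (w - v) * level_volume v"
  using integral_min_increment_bounds[OF integrable_density density_nonneg, of v w]
    measure_superlevel_sets[OF assms(1)] measure_superlevel_sets[OF assms(2)] assms profile_r0_pos
  by (simp_all add: truncated_mass_def)

lemma truncated_mass_eq_1: "f 0 \<le> w \<Longrightarrow> truncated_mass w = 1"
  using density_le_peak[THEN order_trans] integral_density
  by (simp add: truncated_mass_def min_absorb1)

lemma truncated_mass_nonneg: "0 \<le> w \<Longrightarrow> 0 \<le> truncated_mass w"
  unfolding truncated_mass_def using density_nonneg by (intro Bochner_Integration.integral_nonneg) simp

lemma truncated_mass_mono:
  assumes "v \<le> w" "0 \<le> w"
  shows "truncated_mass v \<le> truncated_mass w"
proof (cases "0 \<le> v")
  case True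
  with assms show ?thesis
    unfolding truncated_mass_def
    by (intro Bochner_Integration.integral_mono integrable_min_const[OF integrable_density density_nonneg])
       auto
next
  case False
  then have "truncated_mass v \<le> 0"
    using Bochner_Integration.integral_nonneg[of lborel "\<lambda>x. - min (\<rho> x) v"]
    by (simp add: truncated_mass_def)
  also have "0 \<le> truncated_mass w"
    using assms(2) by (rule truncated_mass_nonneg)
  finally show ?thesis .
qed

lemma level_volume_nonneg: "v \<in> {f r0..f 0} \<Longrightarrow> 0 \<le> level_volume v"
  using level_radius_in[of v] by (simp add: level_volume_def)

lemma level_volume_pos: "v \<in> {f r0..<f 0} \<Longrightarrow> 0 < level_volume v"
  using level_radius_pos[of v] by (simp add: level_volume_def)

lemma level_volume_le: "v \<in> {f r0..f 0} \<Longrightarrow> level_volume v \<le> unit_ball_vol (real DIM('a)) * r0 ^ DIM('a)"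
  using level_radius_in[of v] by (simp add: level_volume_def power_mono)

lemma truncated_mass_continuous: "continuous_on {f r0..f 0} truncated_mass"
proof -
  define K where "K = unit_ball_vol (real DIM('a)) * r0 ^ DIM('a)"
  have "dist (truncated_mass v) (truncated_mass w) \<le> K * dist v w"
    if "v \<in> {f r0..f 0}" "w \<in> {f r0..f 0}" "v \<le> w" for v w
  proof (cases "v = w")
    case False
    with that have "v < w" by simp
    have "0 \<le> (w - v) * level_volume w"
      using \<open>v < w\<close> level_volume_nonneg[OF that(2)] by simp
    also have "\<dots> \<le> truncated_mass w - truncated_mass v"
      using truncated_mass_increment_bounds(1)[OF that(1,2) \<open>v < w\<close>] .
    finally have "dist (truncated_mass v) (truncated_mass w) = truncated_mass w - truncated_mass v"
      by (simp add: dist_real_def)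
    also have "\<dots> \<le> (w - v) * level_volume v"
      using truncated_mass_increment_bounds(2)[OF that(1,2) \<open>v < w\<close>] .
    also have "\<dots> \<le> (w - v) * K"
      unfolding K_def using \<open>v < w\<close> level_volume_le[OF that(1)] by (intro mult_left_mono) auto
    finally show ?thesis
      using \<open>v < w\<close> by (simp add: dist_real_def mult.commute)
  qed simp
  then have "K-lipschitz_on {f r0..f 0} truncated_mass"
    using r0_pos by (intro lipschitz_onI) (metis dist_commute linorder_le_cases, simp add: K_def)
  then show ?thesis
    by (rule lipschitz_on_continuous_on)
qed

lemma truncated_mass_has_derivative:
  assumes "v \<in> {f r0<..<f 0}"
  shows "(truncated_mass has_real_derivative level_volume v) (at v)"
proof (rule has_real_derivative_squeeze[of "f r0" v "f 0"])
  have "continuous_on {f r0..f 0} level_volume"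
    unfolding level_volume_def by (intro continuous_intros level_radius_continuous)
  then show "isCont level_volume v"
    using assms by (intro continuous_on_interior) auto
qed (use assms truncated_mass_increment_bounds in auto)

lemma truncated_mass_strict_mono: "strict_mono_on {f r0..f 0} truncated_mass"
proof (rule strict_mono_onI)
  fix v w assume vw: "v \<in> {f r0..f 0}" "w \<in> {f r0..f 0}" "v < w"
  \<comment> \<open>level_volume vanishes at the peak, so the strict increase is taken below w\<close>
  define m where "m = (v + w) / 2"
  have m: "m \<in> {f r0..<f 0}" "v < m" "m < w"
    using vw by (auto simp: m_def)
  then have "0 < (m - v) * level_volume m"
    using level_volume_pos[OF m(1)] by simp
  also have "\<dots> \<le> truncated_mass m - truncated_mass v"
    using truncated_mass_increment_bounds(1)[of v m] vw m by auto
  finally have "truncated_mass v < truncated_mass m" by simp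
  also have "truncated_mass m \<le> truncated_mass w"
    using truncated_mass_mono[of m w] m vw profile_r0_pos by auto
  finally show "truncated_mass v < truncated_mass w" .
qed

lemma level_volume_power_bounds:
  obtains c1 c2 where "0 < c1" "0 < c2"
    and "\<And>v. v \<in> {f r0..f 0} \<Longrightarrow>
           c1 * (f 0 - v) powr (real DIM('a) / 2) \<le> level_volume v \<and>
           level_volume v \<le> c2 * (f 0 - v) powr (real DIM('a) / 2)"
proof
  define k where "k = real DIM('a) / 2"
  define \<omega> where "\<omega> = unit_ball_vol (real DIM('a))"
  have k: "0 < k" and \<omega>: "0 < \<omega>"
    by (simp_all add: k_def \<omega>_def)
  have A_pos: "0 < A"
    using B_pos B_le_A by simp
  show "0 < \<omega> * (1 / A) powr k" "0 < \<omega> * (1 / B) powr k"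
    using \<omega> A_pos B_pos by simp_all
  fix v assume v: "v \<in> {f r0..f 0}"
  define r where "r = level_radius v"
  have r: "0 \<le> r" "r \<le> r0" "f r = v"
    using level_radius_in[OF v] profile_level_radius[OF v] by (auto simp: r_def)
  have "(f 0 - v) / A \<le> r\<^sup>2" "r\<^sup>2 \<le> (f 0 - v) / B"
    using profile_quadratic_bounds[of r] r A_pos B_pos by (auto simp: field_simps)
  moreover have "0 \<le> f 0 - v"
    using v by simp
  ultimately have "((f 0 - v) / A) powr k \<le> (r\<^sup>2) powr k" "(r\<^sup>2) powr k \<le> ((f 0 - v) / B) powr k"
    using A_pos B_pos k by (auto intro: powr_mono2)
  moreover have "(r\<^sup>2) powr k = r ^ DIM('a)"
  proof (cases "r = 0")
    case False
    with r(1) have "0 < r" by simp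
    then have "(r\<^sup>2) powr k = r powr (2 * k)"
      by (simp add: powr_powr flip: powr_numeral)
    also have "\<dots> = r ^ DIM('a)"
      using \<open>0 < r\<close> by (simp add: k_def powr_realpow)
    finally show ?thesis .
  qed (simp add: k_def)
  moreover have "((f 0 - v) / C) powr k = (1 / C) powr k * (f 0 - v) powr k" if "0 < C" for C
    using that \<open>0 \<le> f 0 - v\<close> by (simp add: powr_divide)
  ultimately show "\<omega> * (1 / A) powr k * (f 0 - v) powr k \<le> level_volume v \<and>
      level_volume v \<le> \<omega> * (1 / B) powr k * (f 0 - v) powr k"
    using \<omega> A_pos B_pos by (simp add: level_volume_def \<omega>_def r_def mult.assoc)
qed

lemma height_function_near_1:
  assumes h: "is_height_function \<rho> h" and u: "0 \<le> u" and s: "s \<in> {truncated_mass u<..<1}"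
  shows "h s \<in> {u<..<f 0}" and "truncated_mass (h s) = s"
proof -
  have "0 < s"
    using truncated_mass_nonneg[OF u] s by simp
  with h s show Hs: "truncated_mass (h s) = s"
    by (simp add: is_height_function_def truncated_mass_def)
  have "h s < f 0"
    using truncated_mass_eq_1[of "h s"] Hs s by force
  moreover have "u < h s"
    using truncated_mass_mono[of "h s" u] Hs s u by force
  ultimately show "h s \<in> {u<..<f 0}"
    by simp
qed

lemma height_function_has_derivative:
  assumes h: "is_height_function \<rho> h" and u: "u \<in> {f r0..f 0}" and s: "s \<in> {truncated_mass u<..<1}"
  shows "(h has_real_derivative inverse (level_volume (h s))) (at s)"
proof (rule has_real_derivative_inverse_on_interval[of u "f 0" truncated_mass "truncated_mass u" 1])
  have sub: "{u..f 0} \<subseteq> {f r0..f 0}"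
    using u by auto
  show "continuous_on {u..f 0} truncated_mass"
    using truncated_mass_continuous sub by (rule continuous_on_subset)
  show "inj_on truncated_mass {u..f 0}"
    using strict_mono_on_imp_inj_on[OF truncated_mass_strict_mono] sub by (rule inj_on_subset)
  have u0: "0 \<le> u"
    using u profile_r0_pos by simp
  show "h y \<in> {u..f 0} \<and> truncated_mass (h y) = y" if "truncated_mass u < y" "y < 1" for y
    using height_function_near_1[OF h u0, of y] that by simp
  have hs: "h s \<in> {f r0<..<f 0}"
    using height_function_near_1(1)[OF h u0 s] u by auto
  show "(truncated_mass has_real_derivative level_volume (h s)) (at (h s))"
    using truncated_mass_has_derivative[OF hs] .
  show "level_volume (h s) \<noteq> 0"
    using level_volume_pos[of "h s"] hs by simp
qed (use s in auto)

lemma height_function_derivative_bounds: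
  assumes h: "is_height_function \<rho> h"
  obtains c C sbar where "0 < c" "0 < C" "0 < sbar" "sbar < 1"
    and "derivative_bounds_on h (\<lambda>s. (1 - s) powr (- real DIM('a) / (real DIM('a) + 2))) c C {sbar<..<1}"
proof -
  define k where "k = real DIM('a) / 2"
  have k: "0 < k" and exponent: "- real DIM('a) / (real DIM('a) + 2) = - (k / (k + 1))"
    by (simp_all add: k_def field_simps)
  obtain c1 c2 where c: "0 < c1" "0 < c2" and volume:
    "\<And>v. v \<in> {f r0..f 0} \<Longrightarrow>
       c1 * (f 0 - v) powr k \<le> level_volume v \<and> level_volume v \<le> c2 * (f 0 - v) powr k"
    using level_volume_power_bounds unfolding k_def by blast
  have deficit: "c1 / (k + 1) * (f 0 - v) powr (k + 1) \<le> 1 - truncated_mass v"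
    "1 - truncated_mass v \<le> c2 / (k + 1) * (f 0 - v) powr (k + 1)" if v: "v \<in> {f r0..f 0}" for v
  proof -
    have cont: "continuous_on {v..f 0} truncated_mass"
      using truncated_mass_continuous by (rule continuous_on_subset) (use v in auto)
    have deriv: "(truncated_mass has_real_derivative level_volume w) (at w)"
      and lower: "c1 * (f 0 - w) powr k \<le> level_volume w"
      and upper: "level_volume w \<le> c2 * (f 0 - w) powr k"
      if "v < w" "w < f 0" for w
      using truncated_mass_has_derivative[of w] volume[of w] that v by auto
    from v have "v \<le> f 0" by simp
    note increment_bounds_of_power_bounded_derivative[OF this cont k deriv lower upper]
    then show "c1 / (k + 1) * (f 0 - v) powr (k + 1) \<le> 1 - truncated_mass v"
      "1 - truncated_mass v \<le> c2 / (k + 1) * (f 0 - v) powr (k + 1)"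
      using truncated_mass_eq_1[of "f 0"] by simp_all
  qed
  define u where "u = (f r0 + f 0) / 2"
  have u: "u \<in> {f r0..f 0}" "f r0 < u" "u < f 0"
    using profile_r0_less_peak by (auto simp: u_def)
  have "0 \<le> truncated_mass (f r0)"
    using profile_r0_pos by (intro truncated_mass_nonneg) simp
  also have "truncated_mass (f r0) < truncated_mass u"
    by (rule strict_mono_onD[OF truncated_mass_strict_mono]) (use u profile_r0_less_peak in auto)
  finally have "0 < truncated_mass u" .
  moreover have "truncated_mass u < 1"
    using strict_mono_onD[OF truncated_mass_strict_mono, of u "f 0"] u profile_r0_less_peak
      truncated_mass_eq_1[of "f 0"] by simp
  moreover have "derivative_bounds_on h (\<lambda>s. (1 - s) powr (- real DIM('a) / (real DIM('a) + 2)))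
      ((c1 / (k + 1)) powr (k / (k + 1)) / c2) ((c2 / (k + 1)) powr (k / (k + 1)) / c1)
      {truncated_mass u<..<1}"
    unfolding derivative_bounds_on_def exponent
  proof
    fix s assume s: "s \<in> {truncated_mass u<..<1}"
    have u0: "0 \<le> u"
      using u profile_r0_pos by simp
    have hs: "h s \<in> {f r0..f 0}" "0 < f 0 - h s" "truncated_mass (h s) = s"
      using height_function_near_1[OF h u0 s] u by auto
    have "(c1 / (k + 1)) powr (k / (k + 1)) / c2 * (1 - s) powr - (k / (k + 1)) \<le> inverse (level_volume (h s))"
      "inverse (level_volume (h s)) \<le> (c2 / (k + 1)) powr (k / (k + 1)) / c1 * (1 - s) powr - (k / (k + 1))"
      using reciprocal_bounds_by_powr[OF hs(2) c k deficit[OF hs(1)] volume[OF hs(1), THEN conjunct1]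
          volume[OF hs(1), THEN conjunct2]]
      by (simp_all only: hs(3))
    with height_function_has_derivative[OF h u(1) s]
    show "\<exists>D. (h has_real_derivative D) (at s) \<and>
        (c1 / (k + 1)) powr (k / (k + 1)) / c2 * (1 - s) powr - (k / (k + 1)) \<le> D \<and>
        D \<le> (c2 / (k + 1)) powr (k / (k + 1)) / c1 * (1 - s) powr - (k / (k + 1))"
      by blast
  qed
  moreover have "0 < (c1 / (k + 1)) powr (k / (k + 1)) / c2" "0 < (c2 / (k + 1)) powr (k / (k + 1)) / c1"
    using c k by simp_all
  ultimately show ?thesis
    using that by blast
qed

end

lemma radial_profile_density_exists:
  fixes \<rho> :: "'a::euclidean_space \<Rightarrow> real"
  assumes bp: "bounded_prob_density \<rho>" and rs: "radially_symmetric \<rho>"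
    and sd: "strictly_radially_decreasing \<rho>" and c2: "C2_on (interior (supp \<rho>)) \<rho>"
    and lap: "laplacian \<rho> 0 < 0"
  obtains f r0 A B where "radial_profile_density \<rho> f r0 A B"
proof -
  have nonneg: "\<And>x. 0 \<le> \<rho> x"
    using bp by (simp add: bounded_prob_density_def)
  obtain e :: 'a where e: "e \<in> Basis"
    using nonempty_Basis by blast
  define f where "f = (\<lambda>r. \<rho> (r *\<^sub>R e))"
  define f' where "f' = (\<lambda>r. partial e \<rho> (r *\<^sub>R e))"
  obtain r1 where r1: "0 < r1" and pos: "\<And>x. norm x < r1 \<Longrightarrow> 0 < \<rho> x"
    using bounded_prob_density_positive_near_origin[OF bp sd] by blast
  have "ball 0 r1 \<subseteq> {x. \<rho> x \<noteq> 0}"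
    using pos by (auto simp: dist_norm less_imp_neq[symmetric])
  then have "ball 0 r1 \<subseteq> supp \<rho>"
    unfolding supp_def using closure_subset by blast
  then have ball_interior: "ball 0 r1 \<subseteq> interior (supp \<rho>)"
    by (simp add: interior_maximal)
  have diff: "\<rho> differentiable (at x)" if "norm x < r1" for x
    using c2 ball_interior that unfolding C2_on_def by auto
  have "0 \<in> interior (supp \<rho>)"
    using ball_interior r1 by auto
  then have diff_partial: "partial i \<rho> differentiable (at 0)" if "i \<in> Basis" for i
    using c2 that unfolding C2_on_def by blast
  define L where "L = - partial e (partial e \<rho>) 0"
  have L: "0 < L"
    using lap laplacian_at_origin_of_radial[OF rs r1 diff diff_partial e]
    by (simp add: L_def mult_less_0_iff)
  have f_deriv: "(f has_real_derivative f' r) (at r)" if "\<bar>r\<bar> < r1" for r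
    using has_real_derivative_partial_along_ray[of \<rho> r e] diff[of "r *\<^sub>R e"] that e
    by (simp add: f_def f'_def)
  have f'_deriv: "(f' has_real_derivative - L) (at 0)"
    using has_real_derivative_partial_along_ray[of "partial e \<rho>" 0 e] diff_partial[OF e]
    by (simp add: f'_def L_def)
  have f'_0: "f' 0 = 0"
  proof (rule DERIV_local_max[OF f_deriv r1])
    show "\<forall>y. \<bar>0 - y\<bar> < r1 \<longrightarrow> f y \<le> f 0"
      using strictly_radially_decreasing_max_at_origin[OF sd nonneg] by (simp add: f_def)
  qed (use r1 in simp)
  obtain \<delta> where \<delta>: "0 < \<delta>"
    and bounds: "\<And>r. r \<in> {0..\<delta>} \<Longrightarrow> f 0 - 3*L/4 * r\<^sup>2 \<le> f r \<and> f r \<le> f 0 - L/4 * r\<^sup>2"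
    using quadratic_bounds_near_critical_point[OF r1 f_deriv f'_0 f'_deriv L] by auto
  define r0 where "r0 = min \<delta> (r1 / 2)"
  have r0: "0 < r0" "r0 \<le> \<delta>" "r0 < r1"
    using \<delta> r1 by (auto simp: r0_def)
  have "radial_profile_density \<rho> f r0 (3*L/4) (L/4)"
  proof
    show "\<rho> x = f (norm x)" for x
      using radially_symmetric_along_axis[OF rs e] by (simp add: f_def)
    show "f b < f a" if "0 \<le> a" "a < b" "0 < f b" for a b
    proof -
      have "norm (a *\<^sub>R e) < norm (b *\<^sub>R e)"
        using that e by simp
      with sd that(3) show ?thesis
        unfolding strictly_radially_decreasing_def f_def by blast
    qed
    show "0 < f r0"
      using pos[of "r0 *\<^sub>R e"] r0 e by (simp add: f_def)
    show "continuous_on {0..r0} f"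
      using r0 by (intro continuous_at_imp_continuous_on ballI DERIV_isCont[OF f_deriv]) auto
    show "f 0 - 3*L/4 * r\<^sup>2 \<le> f r \<and> f r \<le> f 0 - L/4 * r\<^sup>2" if "r \<in> {0..r0}" for r
      using bounds that r0 by auto
  qed (use bp nonneg r0 L in \<open>auto simp: bounded_prob_density_def f_def\<close>)
  then show ?thesis ..
qed

lemma height_function_derivative_bounds_of_density:
  fixes \<rho> :: "'a::euclidean_space \<Rightarrow> real"
  assumes "bounded_prob_density \<rho>" "radially_symmetric \<rho>" "strictly_radially_decreasing \<rho>"
    and "C2_on (interior (supp \<rho>)) \<rho>" "laplacian \<rho> 0 < 0" "is_height_function \<rho> h"
  obtains c C sbar where "0 < c" "0 < C" "0 < sbar" "sbar < 1"
    and "derivative_bounds_on h (\<lambda>s. (1 - s) powr (- real DIM('a) / (real DIM('a) + 2))) c C {sbar<..<1}"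
proof -
  obtain f r0 A B where "radial_profile_density \<rho> f r0 A B"
    using radial_profile_density_exists[OF assms(1-5)] .
  then interpret radial_profile_density \<rho> f r0 A B .
  show ?thesis
    using that by (rule height_function_derivative_bounds[OF assms(6)])
qed

theorem lemma4p2:
  fixes \<rho>0 \<rho>1 :: "'a::euclidean_space \<Rightarrow> real" and h0 h1 :: "real \<Rightarrow> real"
  assumes "bounded_prob_density \<rho>0" "bounded_prob_density \<rho>1"
    and "radially_symmetric \<rho>0" "radially_symmetric \<rho>1"
    and "strictly_radially_decreasing \<rho>0" "strictly_radially_decreasing \<rho>1"
    and "C2_on (interior (supp \<rho>0)) \<rho>0" "C2_on (interior (supp \<rho>1)) \<rho>1"
    and "laplacian \<rho>0 0 < 0" "laplacian \<rho>1 0 < 0"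
    and "is_height_function \<rho>0 h0" "is_height_function \<rho>1 h1"
  shows "\<exists>c C sbar. 0 < c \<and> 0 < C \<and> 0 < sbar \<and> sbar < 1 \<and>
     (\<forall>t\<in>{0..1}. \<forall>s\<in>{sbar<..<1}. \<exists>D.
        ((\<lambda>r. (1 - t) * h0 r + t * h1 r) has_real_derivative D) (at s) \<and>
        c * (1 - s) powr (- real DIM('a) / (real DIM('a) + 2)) \<le> D \<and>
        D \<le> C * (1 - s) powr (- real DIM('a) / (real DIM('a) + 2)))"
proof -
  let ?w = "\<lambda>s. (1 - s) powr (- real DIM('a) / (real DIM('a) + 2))"
  obtain c0 C0 s0 where c0: "0 < c0" "0 < C0" "0 < s0" "s0 < 1"
    and bounds0: "derivative_bounds_on h0 ?w c0 C0 {s0<..<1}"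
    by (rule height_function_derivative_bounds_of_density[OF assms(1,3,5,7,9,11)])
  obtain c1 C1 s1 where c1: "0 < c1" "0 < C1" "0 < s1" "s1 < 1"
    and bounds1: "derivative_bounds_on h1 ?w c1 C1 {s1<..<1}"
    by (rule height_function_derivative_bounds_of_density[OF assms(2,4,6,8,10,12)])
  have "derivative_bounds_on (\<lambda>r. (1 - t) * h0 r + t * h1 r) ?w (min c0 c1) (max C0 C1)
      {max s0 s1<..<1}" if "t \<in> {0..1}" for t
  proof (rule derivative_bounds_on_convex_combination)
    show "derivative_bounds_on h0 ?w c0 C0 {max s0 s1<..<1}"
      using bounds0 by (rule derivative_bounds_on_subset) auto
    show "derivative_bounds_on h1 ?w c1 C1 {max s0 s1<..<1}"
      using bounds1 by (rule derivative_bounds_on_subset) auto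
  qed (use that in auto)
  moreover have "0 < min c0 c1" "0 < max C0 C1" "0 < max s0 s1" "max s0 s1 < 1"
    using c0 c1 by auto
  ultimately show ?thesis
    unfolding derivative_bounds_on_def by blast
qed

end
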